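(* Assume only upper-bound group constraints (with $\mathcal S\ne\emptyset$) and let $F$ be a maxmin-fair distribution over $\mathcal S$ for satisfaction $A=V$. Then for every probability distribution $D$ over $\mathcal S$, $$\max_{u\in\mathcal U}F[u]-\min_{v\in\mathcal U}F[v]\ \le\ \max_{u\in\mathcal U}D[u]-\min_{v\in\mathcal U}D[v].$$
   Context: Ranking setting: $\mathcal U=\{u_1,\dots,u_n\}$ finite set of individuals partitioned into groups $C_1,\dots,C_t$; $R:\mathcal U\to\mathbb R$ relevance with distinct values; rankings are bijections $r:\mathcal U\to[n]$. Only upper bounds: $\mathcal S=\{r:\ |\{u\in C_k: r(u)\le i\}|\le u_i^k\ \forall i\in[n],k\in[t]\}$ for given integers $u_i^k$. Value function $V(r,u)=f(r(u))-g(u)$ with $f:[n]\to\mathbb R$ non-increasing and $g:\mathcal U\to\mathbb R$ satisfying $R(u)\ge R(v)\Rightarrow g(u)\ge g(v)$. For a distribution $D$ over $\mathcal S$, $D[u]=\mathbb E_{r\sim D}[V(r,u)]$. $F$ is maxmin-fair if for every distribution $D$ over $\mathcal S$ and every $u$: $D[u]>F[u]$ implies there is $v$ with $D[v]<F[v]\le F[u]$. *)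

theory Defs
  imports "HOL-Probability.Probability"
begin

text \<open>Rankings of the finite set U (with n = card U): bijections U -> {1..n}.
  To make the set of rankings a genuine finite set of functions we fix the
  value 0 outside U (extensional representation).\<close>
definition is_ranking :: "'a set \<Rightarrow> ('a \<Rightarrow> nat) \<Rightarrow> bool" where
  "is_ranking U r \<longleftrightarrow> bij_betw r U {1..card U} \<and> (\<forall>u. u \<notin> U \<longrightarrow> r u = 0)"

definition feasible :: "'a set \<Rightarrow> (nat \<Rightarrow> 'a set) \<Rightarrow> nat \<Rightarrow> (nat \<Rightarrow> nat \<Rightarrow> int)
    \<Rightarrow> ('a \<Rightarrow> nat) set" where
  "feasible U C t ub = {r. is_ranking U r \<and>
     (\<forall>i\<in>{1..card U}. \<forall>k\<in>{1..t}. int (card {u \<in> C k. r u \<le> i}) \<le> ub i k)}"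

definition V :: "(nat \<Rightarrow> real) \<Rightarrow> ('a \<Rightarrow> real) \<Rightarrow> ('a \<Rightarrow> nat) \<Rightarrow> 'a \<Rightarrow> real" where
  "V f g r u = f (r u) - g u"

definition dval :: "(nat \<Rightarrow> real) \<Rightarrow> ('a \<Rightarrow> real) \<Rightarrow> ('a \<Rightarrow> nat) pmf \<Rightarrow> 'a \<Rightarrow> real" where
  "dval f g D u = measure_pmf.expectation D (\<lambda>r. V f g r u)"

definition maxmin_fair :: "'a set \<Rightarrow> ('a \<Rightarrow> nat) set \<Rightarrow> (nat \<Rightarrow> real) \<Rightarrow> ('a \<Rightarrow> real)
    \<Rightarrow> ('a \<Rightarrow> nat) pmf \<Rightarrow> bool" where
  "maxmin_fair U S f g F \<longleftrightarrow> set_pmf F \<subseteq> S \<and>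
     (\<forall>D. set_pmf D \<subseteq> S \<longrightarrow> (\<forall>u\<in>U. dval f g D u > dval f g F u \<longrightarrow>
        (\<exists>v\<in>U. dval f g D v < dval f g F v \<and> dval f g F v \<le> dval f g F u)))"

end

theory Submission
  imports Defs "HOL-Combinatorics.Transposition"
begin

text \<open>The minimum half follows from maxmin-fairness at a user of least F-value. For the
  maximum, suppose every user gets less than \<open>M = max F\<close> under \<open>D\<close>. Every ranking hands out
  the same positions, so the total value is the same for all distributions, and the set \<open>L\<close>
  of users below \<open>M\<close> gains in total under \<open>D\<close>. Hence some ranking \<open>r0\<close> in the support of
  \<open>F\<close> gives \<open>L\<close> less exposure \<open>\<Sum>v\<in>L. f (r v)\<close> than some feasible \<open>r'\<close>. With upper bounds
  only, \<open>L\<close> can be moved forward: among feasible rankings placing each member of \<open>L\<close> no later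
  than \<open>r0\<close> does, one minimising the positions of \<open>L\<close> admits no feasible swap of a member
  of \<open>L\<close> with an earlier non-member, and such a ranking has the largest prefix counts
  \<open>card {v\<in>L. r v \<le> i}\<close> among all feasible rankings; by Abel summation it gives \<open>L\<close> at least
  the exposure of \<open>r'\<close>. Substituting it for \<open>r0\<close> in \<open>F\<close> helps every member of \<open>L\<close>, one
  strictly, and hurts only users at value \<open>M\<close>, contradicting maxmin-fairness.\<close>

lemma feasible_bij: "r \<in> feasible U C t ub \<Longrightarrow> bij_betw r U {1..card U}"
  unfolding feasible_def is_ranking_def by auto

lemma feasible_range: "r \<in> feasible U C t ub \<Longrightarrow> u \<in> U \<Longrightarrow> r u \<in> {1..card U}"
  using feasible_bij bij_betwE by blast

lemma feasible_inj: "r \<in> feasible U C t ub \<Longrightarrow> inj_on r U"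
  using feasible_bij bij_betw_imp_inj_on by blast

lemma feasible_prefix_count_le:
  "r \<in> feasible U C t ub \<Longrightarrow> i \<in> {1..card U} \<Longrightarrow> k \<in> {1..t}
    \<Longrightarrow> int (card {u \<in> C k. r u \<le> i}) \<le> ub i k"
  unfolding feasible_def by auto

lemma feasibleI:
  assumes "bij_betw r U {1..card U}" and "\<And>u. u \<notin> U \<Longrightarrow> r u = 0"
    and "\<And>i k. i \<in> {1..card U} \<Longrightarrow> k \<in> {1..t} \<Longrightarrow> int (card {u \<in> C k. r u \<le> i}) \<le> ub i k"
  shows "r \<in> feasible U C t ub"
  using assms unfolding feasible_def is_ranking_def by auto

lemma finite_feasible:
  assumes "finite U"
  shows "finite (feasible U C t ub)"
proof (rule finite_subset)
  show "feasible U C t ub \<subseteq> {r. \<forall>u. (u \<in> U \<longrightarrow> r u \<in> {1..card U}) \<and> (u \<notin> U \<longrightarrow> r u = 0)}"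
    unfolding feasible_def is_ranking_def bij_betw_def by auto
  show "finite {r. \<forall>u. (u \<in> U \<longrightarrow> r u \<in> {1..card U}) \<and> (u \<notin> U \<longrightarrow> r u = (0::nat))}"
    by (rule finite_set_of_finite_funs) (use assms in auto)
qed

lemma sum_comp_eq_prefix_counts:
  fixes f :: "nat \<Rightarrow> real"
  assumes L: "finite L" and r: "\<forall>v\<in>L. r v \<in> {1..n}"
  shows "(\<Sum>v\<in>L. f (r v))
           = f n * card L + (\<Sum>i\<in>{1..<n}. (f i - f (Suc i)) * card {v\<in>L. r v \<le> i})"
proof -
  have telescope: "f p = f n + (\<Sum>i\<in>{1..<n}. if p \<le> i then f i - f (Suc i) else 0)"
    if p: "p \<in> {1..n}" for p
  proof -
    have "(\<Sum>i\<in>{1..<n}. if p \<le> i then f i - f (Suc i) else 0) = (\<Sum>i=p..<n. f i - f (Suc i))"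
      using p by (subst sum.inter_filter[symmetric]) (auto intro: sum.cong)
    also have "\<dots> = f p - f n"
      using sum_Suc_diff'[of p n "\<lambda>i. - f i"] p by simp
    finally show ?thesis by simp
  qed
  have "(\<Sum>v\<in>L. f (r v))
      = (\<Sum>v\<in>L. f n + (\<Sum>i\<in>{1..<n}. if r v \<le> i then f i - f (Suc i) else 0))"
    using r by (intro sum.cong refl telescope) auto
  also have "\<dots> = f n * card L + (\<Sum>i\<in>{1..<n}. \<Sum>v\<in>L. if r v \<le> i then f i - f (Suc i) else 0)"
    by (simp add: sum.distrib sum.swap[of _ L])
  also have "\<dots> = f n * card L + (\<Sum>i\<in>{1..<n}. (f i - f (Suc i)) * card {v\<in>L. r v \<le> i})"
    using L by (simp add: sum.inter_filter[symmetric] mult.commute)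
  finally show ?thesis .
qed

lemma sum_comp_le_if_prefix_counts_le:
  fixes f :: "nat \<Rightarrow> real"
  assumes L: "finite L" and r: "\<forall>v\<in>L. r v \<in> {1..n}" and s: "\<forall>v\<in>L. s v \<in> {1..n}"
    and f_antimono: "\<And>i. 1 \<le> i \<Longrightarrow> i < n \<Longrightarrow> f (Suc i) \<le> f i"
    and counts: "\<And>i. card {v\<in>L. r v \<le> i} \<le> card {v\<in>L. s v \<le> i}"
  shows "(\<Sum>v\<in>L. f (r v)) \<le> (\<Sum>v\<in>L. f (s v))"
proof -
  have "(\<Sum>i\<in>{1..<n}. (f i - f (Suc i)) * card {v\<in>L. r v \<le> i})
      \<le> (\<Sum>i\<in>{1..<n}. (f i - f (Suc i)) * card {v\<in>L. s v \<le> i})"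
    using f_antimono counts by (intro sum_mono mult_left_mono) auto
  then show ?thesis
    using sum_comp_eq_prefix_counts[OF L r, of f] sum_comp_eq_prefix_counts[OF L s, of f]
    by linarith
qed

lemma swap_eq_comp_transpose: "r(x := r y, y := r x) = r \<circ> Transposition.transpose x y"
  by (auto simp: fun_eq_iff Transposition.transpose_def)

lemma card_prefix_swap_le:
  fixes r :: "'a \<Rightarrow> nat"
  assumes A: "finite A" and xy: "r x \<le> r y"
  shows "card {z\<in>A. (r(x := r y, y := r x)) z \<le> j}
           \<le> card {z\<in>A. r z \<le> j} + (if y \<in> A \<and> x \<notin> A \<and> r x \<le> j \<and> j < r y then 1 else 0)"
proof -
  let ?P = "{z\<in>A. r z \<le> j}" and ?Q = "{z\<in>A. (r(x := r y, y := r x)) z \<le> j}"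
  have finP: "finite ?P" using A by simp
  consider (both) "x \<in> A \<longleftrightarrow> y \<in> A" | (x_only) "x \<in> A" "y \<notin> A"
    | (y_only) "y \<in> A" "x \<notin> A"
    by blast
  then show ?thesis
  proof cases
    case both
    then have "z \<in> A \<longleftrightarrow> Transposition.transpose x y z \<in> A" for z
      by (auto simp: Transposition.transpose_def)
    then have "?Q = Transposition.transpose x y ` ?P"
      by (auto simp: in_transpose_image_iff swap_eq_comp_transpose)
    then show ?thesis by (simp add: card_image)
  next
    case x_only
    then have "?Q \<subseteq> ?P" using xy by auto
    then show ?thesis using finP by (simp add: card_mono trans_le_add1)
  next
    case y_only
    show ?thesis
    proof (cases "r x \<le> j \<and> j < r y")
      case True
      then have "?Q \<subseteq> insert y ?P" using y_only by auto
      then have "card ?Q \<le> card (insert y ?P)" using finP by (intro card_mono) auto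
      then show ?thesis using finP True y_only by (simp add: card_insert_if split: if_splits)
    next
      case False
      then have "?Q \<subseteq> ?P" using y_only xy by auto
      then show ?thesis using finP by (simp add: card_mono trans_le_add1)
    qed
  qed
qed

lemma dval_eq_expectation:
  assumes "finite (set_pmf E)"
  shows "dval f g E v = measure_pmf.expectation E (\<lambda>r. f (r v)) - g v"
  unfolding dval_def V_def using assms by (simp add: integrable_measure_pmf_finite)

lemma sum_dval_eq_expectation:
  assumes "finite (set_pmf E)"
  shows "(\<Sum>v\<in>L. dval f g E v)
           = measure_pmf.expectation E (\<lambda>r. \<Sum>v\<in>L. f (r v)) - (\<Sum>v\<in>L. g v)"
  using assms
  by (simp add: dval_eq_expectation integral_sum integrable_measure_pmf_finite sum_subtractf)

lemma exists_set_pmf_le_expectation: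
  fixes \<phi> :: "'b \<Rightarrow> real"
  assumes fin: "finite (set_pmf M)"
  shows "\<exists>x\<in>set_pmf M. \<phi> x \<le> measure_pmf.expectation M \<phi>"
proof -
  define m where "m = Min (\<phi> ` set_pmf M)"
  have "m \<in> \<phi> ` set_pmf M" unfolding m_def using fin set_pmf_not_empty by (intro Min_in) auto
  moreover have "m \<le> measure_pmf.expectation M \<phi>"
    unfolding m_def using fin
    by (intro measure_pmf.integral_ge_const)
      (auto simp: integrable_measure_pmf_finite AE_measure_pmf_iff)
  ultimately show ?thesis by auto
qed

lemma exists_set_pmf_ge_expectation:
  fixes \<phi> :: "'b \<Rightarrow> real"
  assumes "finite (set_pmf M)"
  shows "\<exists>x\<in>set_pmf M. measure_pmf.expectation M \<phi> \<le> \<phi> x"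
  using exists_set_pmf_le_expectation[OF assms, of "\<lambda>x. - \<phi> x"] by auto

lemma dval_map_pmf_replace:
  assumes "finite (set_pmf F)"
  shows "dval f g (map_pmf (\<lambda>r. if r = r0 then r1 else r) F) v
           = dval f g F v + pmf F r0 * (f (r1 v) - f (r0 v))"
proof -
  have "V f g (if r = r0 then r1 else r) v
      = V f g r v + indicator {r0} r * (f (r1 v) - f (r0 v))" for r
    by (simp add: V_def indicator_def)
  then show ?thesis
    unfolding dval_def integral_map_pmf using assms
    by (simp add: integrable_measure_pmf_finite measure_pmf_single)
qed

lemma Min_dval_le_of_maxmin_fair:
  assumes U: "finite U" "U \<noteq> {}" and fair: "maxmin_fair U S f g F" and D: "set_pmf D \<subseteq> S"
  shows "(MIN v\<in>U. dval f g D v) \<le> (MIN v\<in>U. dval f g F v)"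
proof (rule ccontr)
  let ?m = "MIN v\<in>U. dval f g F v" and ?mD = "MIN v\<in>U. dval f g D v"
  assume "\<not> ?thesis"
  then have less: "?m < ?mD" by simp
  have "?m \<in> (\<lambda>v. dval f g F v) ` U" using U by (intro Min_in) auto
  then obtain u where u: "u \<in> U" "dval f g F u = ?m" by auto
  have D_ge: "?mD \<le> dval f g D v" if "v \<in> U" for v using U that by simp
  have "dval f g F u < dval f g D u" using less u D_ge[OF u(1)] by simp
  then obtain y where "y \<in> U" "dval f g D y < dval f g F y" "dval f g F y \<le> dval f g F u"
    using fair D u(1) unfolding maxmin_fair_def by blast
  then show False using less u(2) D_ge[of y] by simp
qed

locale upper_bound_constraints =
  fixes U :: "'a set" and C :: "nat \<Rightarrow> 'a set" and t :: nat and ub :: "nat \<Rightarrow> nat \<Rightarrow> int"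
  assumes finite_U: "finite U"
    and groups_subset: "\<forall>k\<in>{1..t}. C k \<subseteq> U"
    and groups_disjoint: "\<forall>k\<in>{1..t}. \<forall>l\<in>{1..t}. k \<noteq> l \<longrightarrow> C k \<inter> C l = {}"
    and groups_cover: "(\<Union>k\<in>{1..t}. C k) = U"
begin

abbreviation S :: "('a \<Rightarrow> nat) set" where
  "S \<equiv> feasible U C t ub"

lemma finite_group: "k \<in> {1..t} \<Longrightarrow> finite (C k)"
  using groups_subset finite_U finite_subset by blast

lemma group_unique: "k \<in> {1..t} \<Longrightarrow> l \<in> {1..t} \<Longrightarrow> x \<in> C k \<Longrightarrow> x \<in> C l \<Longrightarrow> k = l"
  using groups_disjoint by blast

lemma card_eq_sum_groups:
  assumes "B \<subseteq> U"
  shows "card B = (\<Sum>k\<in>{1..t}. card (B \<inter> C k))"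
proof -
  have "B = (\<Union>k\<in>{1..t}. B \<inter> C k)" using assms groups_cover by auto
  also have "card \<dots> = (\<Sum>k\<in>{1..t}. card (B \<inter> C k))"
    using finite_group groups_disjoint by (intro card_UN_disjoint) auto
  finally show ?thesis .
qed

lemma swap_feasible:
  assumes r: "r \<in> S" and x: "x \<in> U" and y: "y \<in> U" and xy: "r x < r y"
    and room: "\<And>j k. k \<in> {1..t} \<Longrightarrow> j \<in> {1..card U} \<Longrightarrow> r x \<le> j \<Longrightarrow> j < r y
                 \<Longrightarrow> y \<in> C k \<Longrightarrow> x \<notin> C k \<Longrightarrow> int (card {z \<in> C k. r z \<le> j}) + 1 \<le> ub j k"
  shows "r(x := r y, y := r x) \<in> S"
proof (rule feasibleI)
  have "bij_betw (Transposition.transpose x y) U U" using x y by simp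
  then show "bij_betw (r(x := r y, y := r x)) U {1..card U}"
    unfolding swap_eq_comp_transpose using feasible_bij[OF r] by (rule bij_betw_trans)
  show "(r(x := r y, y := r x)) u = 0" if "u \<notin> U" for u
    using r x y that unfolding feasible_def is_ranking_def by auto
  fix j k assume j: "j \<in> {1..card U}" and k: "k \<in> {1..t}"
  have swapped: "card {z \<in> C k. (r(x := r y, y := r x)) z \<le> j}
      \<le> card {z \<in> C k. r z \<le> j} + (if y \<in> C k \<and> x \<notin> C k \<and> r x \<le> j \<and> j < r y then 1 else 0)"
    using card_prefix_swap_le[OF finite_group[OF k]] xy by simp
  show "int (card {z \<in> C k. (r(x := r y, y := r x)) z \<le> j}) \<le> ub j k"
  proof (cases "y \<in> C k \<and> x \<notin> C k \<and> r x \<le> j \<and> j < r y")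
    case True
    then show ?thesis using swapped[unfolded if_P[OF True]] room[OF k j] True by linarith
  next
    case False
    then show ?thesis
      using swapped[unfolded if_not_P[OF False]] feasible_prefix_count_le[OF r j k] by linarith
  qed
qed

definition no_improving_swap :: "'a set \<Rightarrow> ('a \<Rightarrow> nat) \<Rightarrow> bool" where
  "no_improving_swap L r \<longleftrightarrow> (\<forall>x\<in>U - L. \<forall>y\<in>L. r x < r y \<longrightarrow> r(x := r y, y := r x) \<notin> S)"

lemma exists_no_improving_swap_below:
  assumes L: "L \<subseteq> U" and r0: "r0 \<in> S"
  shows "\<exists>r\<in>S. (\<forall>v\<in>L. r v \<le> r0 v) \<and> no_improving_swap L r"
proof -
  define P where "P r \<longleftrightarrow> r \<in> S \<and> (\<forall>v\<in>L. r v \<le> r0 v)" for r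
  obtain r where "P r" and least: "\<And>s. P s \<Longrightarrow> (\<Sum>v\<in>L. r v) \<le> (\<Sum>v\<in>L. s v)"
    using ex_has_least_nat[of P r0 "\<lambda>r. \<Sum>v\<in>L. r v"] r0 unfolding P_def by blast
  then have r: "r \<in> S" and below: "\<forall>v\<in>L. r v \<le> r0 v" unfolding P_def by auto
  have "r(x := r y, y := r x) \<notin> S" if x: "x \<in> U - L" and y: "y \<in> L" and xy: "r x < r y" for x y
  proof
    let ?s = "r(x := r y, y := r x)"
    assume "?s \<in> S"
    moreover have le: "\<forall>v\<in>L. ?s v \<le> r v" using x xy by auto
    ultimately have "P ?s" using below unfolding P_def by (meson order_trans)
    moreover have "(\<Sum>v\<in>L. ?s v) < (\<Sum>v\<in>L. r v)"
      using finite_subset[OF L finite_U] le x y xy by (intro sum_strict_mono_ex1) auto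
    ultimately show False using least by fastforce
  qed
  then show ?thesis using r below unfolding no_improving_swap_def by blast
qed

lemma no_improving_swap_group_order:
  assumes opt: "no_improving_swap L r" and r: "r \<in> S" and k: "k \<in> {1..t}"
    and x: "x \<in> C k" "x \<notin> L" and y: "y \<in> C k" "y \<in> L"
  shows "r y < r x"
proof -
  have U: "x \<in> U" "y \<in> U" using groups_subset k x y by auto
  have "r x \<noteq> r y" using feasible_inj[OF r] U x y by (auto dest: inj_onD)
  moreover have "\<not> r x < r y"
  proof
    assume xy: "r x < r y"
    have "r(x := r y, y := r x) \<in> S"
    proof (rule swap_feasible[OF r U xy])
      fix j l assume "l \<in> {1..t}" "y \<in> C l" "x \<notin> C l"
      then show "int (card {z \<in> C l. r z \<le> j}) + 1 \<le> ub j l"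
        using group_unique[OF k, of l y] x y by blast
    qed
    then show False using opt xy U x y unfolding no_improving_swap_def by blast
  qed
  ultimately show ?thesis by simp
qed

lemma no_improving_swap_blocked:
  assumes opt: "no_improving_swap L r" and r: "r \<in> S"
    and x: "x \<in> U" "x \<notin> L" "x \<notin> C k" and y: "y \<in> L" "y \<in> C k" and k: "k \<in> {1..t}"
    and xy: "r x < r y"
  shows "\<exists>j\<in>{1..card U}. r x \<le> j \<and> j < r y \<and> ub j k < int (card {z \<in> C k. r z \<le> j}) + 1"
proof (rule ccontr)
  assume no_block: "\<not> ?thesis"
  have "r(x := r y, y := r x) \<in> S"
  proof (rule swap_feasible[OF r x(1) _ xy])
    show "y \<in> U" using groups_subset k y by auto
    fix j l assume "l \<in> {1..t}" "j \<in> {1..card U}" "r x \<le> j" "j < r y" "y \<in> C l"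
    then show "int (card {z \<in> C l. r z \<le> j}) + 1 \<le> ub j l"
      using no_block group_unique[OF k, of l y] y by force
  qed
  then show False using opt x y xy unfolding no_improving_swap_def by blast
qed

lemma prefix_count_jump_outside:
  assumes r: "r \<in> S" and r': "r' \<in> S" and L: "L \<subseteq> U"
    and le: "card {v\<in>L. r' v \<le> i} \<le> card {v\<in>L. r v \<le> i}"
    and jump: "card {v\<in>L. r v \<le> Suc i} < card {v\<in>L. r' v \<le> Suc i}"
  shows "\<exists>x\<in>U - L. r x = Suc i"
proof -
  have finL: "finite L" using L finite_U finite_subset by blast
  have "card {v\<in>L. r' v = Suc i} \<le> 1"
    unfolding One_nat_def using finL feasible_inj[OF r'] L
    by (subst card_le_Suc0_iff_eq) (auto simp: inj_on_def subset_iff)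
  moreover have "card {v\<in>L. r' v \<le> Suc i} \<le> card {v\<in>L. r' v \<le> i} + card {v\<in>L. r' v = Suc i}"
    using card_Un_le[of "{v\<in>L. r' v \<le> i}" "{v\<in>L. r' v = Suc i}"]
    by (simp add: Collect_disj_eq[symmetric] le_Suc_eq conj_disj_distribL)
  ultimately have "card {v\<in>L. r' v \<le> Suc i} \<le> card {v\<in>L. r' v \<le> i} + 1"
    by linarith
  then have no_new: "card {v\<in>L. r v \<le> Suc i} \<le> card {v\<in>L. r v \<le> i}"
    using le jump by linarith
  have not_L: "v \<notin> L" if "r v = Suc i" for v
  proof
    assume v: "v \<in> L"
    then have "{v\<in>L. r v \<le> Suc i} = insert v {v\<in>L. r v \<le> i}"
      using that feasible_inj[OF r] L by (auto simp: le_Suc_eq inj_on_def subset_iff)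
    then show False using no_new finL that by simp
  qed
  have "Suc i \<le> card U"
  proof (rule ccontr)
    assume "\<not> Suc i \<le> card U"
    then have "{v\<in>L. r v \<le> Suc i} = L" using feasible_range[OF r] L by fastforce
    moreover have "card {v\<in>L. r' v \<le> Suc i} \<le> card L" using finL by (intro card_mono) auto
    ultimately show False using jump by simp
  qed
  then have "Suc i \<in> r ` U" using bij_betw_imp_surj_on[OF feasible_bij[OF r]] by simp
  then obtain x where "x \<in> U" "r x = Suc i" by auto
  then show ?thesis using not_L by blast
qed

lemma no_improving_swap_group_prefix_count_ge:
  assumes opt: "no_improving_swap L r" and r: "r \<in> S" and r': "r' \<in> S" and L: "L \<subseteq> U"
    and x: "x \<in> U" "x \<notin> L" and rx: "r x = p" and a: "a \<in> {1..t}"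
  shows "card ({v\<in>L. r' v \<le> p} \<inter> C a) \<le> card ({v\<in>L. r v \<le> p} \<inter> C a)"
proof (rule ccontr)
  let ?P = "{v\<in>L. r v \<le> p}" and ?P' = "{v\<in>L. r' v \<le> p}"
  have finL: "finite L" using L finite_U finite_subset by blast
  assume "\<not> ?thesis"
  then have jump: "card (?P \<inter> C a) < card (?P' \<inter> C a)" by simp
  have "\<exists>v\<in>L \<inter> C a. p < r v"
  proof (rule ccontr)
    assume "\<not> ?thesis"
    then have "?P' \<inter> C a \<subseteq> ?P \<inter> C a" by (auto simp: not_less)
    then have "card (?P' \<inter> C a) \<le> card (?P \<inter> C a)" using finL by (intro card_mono) auto
    then show False using jump by simp
  qed
  then obtain v where v: "v \<in> L" "v \<in> C a" and pv: "p < r v" by blast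
  have in_L: "z \<in> L" if "z \<in> C a" "r z < r v" for z
  proof (rule ccontr)
    assume "z \<notin> L"
    then have "r v < r z" by (rule no_improving_swap_group_order[OF opt r a that(1) _ v(2,1)])
    then show False using that(2) by simp
  qed
  have xa: "x \<notin> C a" using in_L[of x] x(2) rx pv by auto
  txt \<open>\<open>y\<close>, the first member of group \<open>a\<close> after position \<open>p\<close>, lies in \<open>L\<close>; swapping it with
    \<open>x\<close> is blocked only if group \<open>a\<close> is full at some \<open>j\<close>, which \<open>r'\<close> rules out.\<close>
  obtain y where y: "y \<in> C a" "p < r y"
    and y_least: "\<And>z. z \<in> C a \<Longrightarrow> p < r z \<Longrightarrow> r y \<le> r z"
    using ex_has_least_nat[of "\<lambda>z. z \<in> C a \<and> p < r z" v r] v pv by blast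
  have yL: "y \<in> L"
  proof (cases "y = v")
    case False
    have "y \<in> U" "v \<in> U" using groups_subset a y(1) v(2) by auto
    then have "r y \<noteq> r v" using False inj_onD[OF feasible_inj[OF r]] by blast
    then show ?thesis using in_L[OF y(1)] y_least[OF v(2) pv] by simp
  qed (use v in simp)
  obtain j where j: "j \<in> {1..card U}" "p \<le> j" "j < r y"
    and full: "ub j a < int (card {z \<in> C a. r z \<le> j}) + 1"
    using no_improving_swap_blocked[OF opt r x xa yL y(1) a] rx y(2) by auto
  have "{z \<in> C a. r z \<le> j} \<subseteq> ?P \<inter> C a"
  proof
    fix z assume z: "z \<in> {z \<in> C a. r z \<le> j}"
    have "r z \<le> p"
    proof (rule ccontr)
      assume "\<not> r z \<le> p"
      then have "r y \<le> r z" using y_least z by simp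
      then show False using z j(3) by simp
    qed
    then show "z \<in> ?P \<inter> C a" using z in_L[of z] pv by auto
  qed
  then have "card {z \<in> C a. r z \<le> j} \<le> card (?P \<inter> C a)" using finL by (intro card_mono) auto
  also have "\<dots> < card (?P' \<inter> C a)" by (rule jump)
  also have "\<dots> \<le> card {z \<in> C a. r' z \<le> j}"
    using j(2) finite_group[OF a] by (intro card_mono) auto
  finally show False using feasible_prefix_count_le[OF r' j(1) a] full by linarith
qed

lemma no_improving_swap_prefix_count_Suc:
  assumes opt: "no_improving_swap L r" and r: "r \<in> S" and r': "r' \<in> S" and L: "L \<subseteq> U"
    and le: "card {v\<in>L. r' v \<le> i} \<le> card {v\<in>L. r v \<le> i}"
  shows "card {v\<in>L. r' v \<le> Suc i} \<le> card {v\<in>L. r v \<le> Suc i}"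
proof (rule ccontr)
  let ?P = "{v\<in>L. r v \<le> Suc i}" and ?P' = "{v\<in>L. r' v \<le> Suc i}"
  assume "\<not> ?thesis"
  then have jump: "card ?P < card ?P'" by simp
  obtain x where x: "x \<in> U" "x \<notin> L" and rx: "r x = Suc i"
    using prefix_count_jump_outside[OF r r' L le jump] by auto
  have "(\<Sum>k\<in>{1..t}. card (?P' \<inter> C k)) \<le> (\<Sum>k\<in>{1..t}. card (?P \<inter> C k))"
    by (intro sum_mono no_improving_swap_group_prefix_count_ge[OF opt r r' L x rx])
  moreover have "?P \<subseteq> U" "?P' \<subseteq> U" using L by auto
  ultimately show False
    using jump card_eq_sum_groups[of ?P] card_eq_sum_groups[of ?P'] by linarith
qed

lemma no_improving_swap_prefix_counts_ge:
  assumes opt: "no_improving_swap L r" and r: "r \<in> S" and r': "r' \<in> S" and L: "L \<subseteq> U"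
  shows "card {v\<in>L. r' v \<le> i} \<le> card {v\<in>L. r v \<le> i}"
proof (induction i)
  case 0
  have "{v\<in>L. r' v \<le> 0} = {}" using feasible_range[OF r'] L by fastforce
  then show ?case by (simp only: card.empty le0)
next
  case (Suc i)
  then show ?case by (rule no_improving_swap_prefix_count_Suc[OF opt r r' L])
qed

lemma exists_prefix_dominating_below:
  assumes L: "L \<subseteq> U" and r0: "r0 \<in> S"
  shows "\<exists>r\<in>S. (\<forall>v\<in>L. r v \<le> r0 v)
           \<and> (\<forall>r'\<in>S. \<forall>i. card {v\<in>L. r' v \<le> i} \<le> card {v\<in>L. r v \<le> i})"
  using exists_no_improving_swap_below[OF L r0] no_improving_swap_prefix_counts_ge[OF _ _ _ L]
  by blast

lemma finite_set_pmf_feasible: "set_pmf E \<subseteq> S \<Longrightarrow> finite (set_pmf E)"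
  using finite_feasible[OF finite_U] finite_subset by blast

lemma sum_dval_eq_const:
  assumes E: "set_pmf E \<subseteq> S"
  shows "(\<Sum>v\<in>U. dval f g E v) = (\<Sum>i=1..card U. f i) - (\<Sum>v\<in>U. g v)"
proof -
  have "(\<Sum>v\<in>U. f (r v)) = (\<Sum>i=1..card U. f i)" if "r \<in> set_pmf E" for r
    using sum.reindex_bij_betw[OF feasible_bij] E that by blast
  then have "measure_pmf.expectation E (\<lambda>r. \<Sum>v\<in>U. f (r v))
      = measure_pmf.expectation E (\<lambda>_. \<Sum>i=1..card U. f i)"
    by (intro integral_cong_AE) (auto simp: AE_measure_pmf_iff)
  then show ?thesis using sum_dval_eq_expectation[OF finite_set_pmf_feasible[OF E]] by simp
qed

lemma sum_dval_gain_below_Max: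
  assumes F: "set_pmf F \<subseteq> S" and D: "set_pmf D \<subseteq> S" and U: "U \<noteq> {}"
    and less: "(MAX v\<in>U. dval f g D v) < (MAX v\<in>U. dval f g F v)"
  defines "L \<equiv> {v\<in>U. dval f g F v < (MAX u\<in>U. dval f g F u)}"
  shows "(\<Sum>v\<in>L. dval f g F v) < (\<Sum>v\<in>L. dval f g D v)"
proof -
  let ?M = "MAX u\<in>U. dval f g F u"
  have L: "L \<subseteq> U" unfolding L_def by auto
  have "?M \<in> (\<lambda>v. dval f g F v) ` U" using finite_U U by (intro Max_in) auto
  then obtain u where u: "u \<in> U" "dval f g F u = ?M" by auto
  have "dval f g D v < dval f g F v" if "v \<in> U - L" for v
  proof -
    have "dval f g D v \<le> (MAX v\<in>U. dval f g D v)" using that finite_U by simp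
    then show ?thesis using that less unfolding L_def by auto
  qed
  then have "(\<Sum>v\<in>U - L. dval f g D v) < (\<Sum>v\<in>U - L. dval f g F v)"
    using u finite_U unfolding L_def by (intro sum_strict_mono) auto
  moreover have "(\<Sum>v\<in>U. dval f g D v) = (\<Sum>v\<in>U. dval f g F v)"
    using sum_dval_eq_const[OF D] sum_dval_eq_const[OF F] by simp
  ultimately show ?thesis
    using sum.subset_diff[OF L finite_U, of "dval f g D"]
      sum.subset_diff[OF L finite_U, of "dval f g F"] by linarith
qed

lemma exists_improving_replacement:
  assumes f_mono: "\<forall>i j. 1 \<le> i \<longrightarrow> i \<le> j \<longrightarrow> j \<le> card U \<longrightarrow> f j \<le> f i"
    and F: "set_pmf F \<subseteq> S" and D: "set_pmf D \<subseteq> S" and L: "L \<subseteq> U"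
    and gain: "(\<Sum>v\<in>L. dval f g F v) < (\<Sum>v\<in>L. dval f g D v)"
  shows "\<exists>r0\<in>set_pmf F. \<exists>r1\<in>S. (\<forall>v\<in>L. f (r0 v) \<le> f (r1 v)) \<and> (\<exists>v\<in>L. f (r0 v) < f (r1 v))"
proof -
  define \<Phi> where "\<Phi> r = (\<Sum>v\<in>L. f (r v))" for r
  have finF: "finite (set_pmf F)" and finD: "finite (set_pmf D)"
    using F D by (auto intro: finite_set_pmf_feasible)
  have "measure_pmf.expectation F \<Phi> < measure_pmf.expectation D \<Phi>"
    using gain unfolding \<Phi>_def sum_dval_eq_expectation[OF finF] sum_dval_eq_expectation[OF finD]
    by simp
  moreover obtain r0 where r0: "r0 \<in> set_pmf F" "\<Phi> r0 \<le> measure_pmf.expectation F \<Phi>"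
    using exists_set_pmf_le_expectation[OF finF] by blast
  moreover obtain r' where r': "r' \<in> set_pmf D" "measure_pmf.expectation D \<Phi> \<le> \<Phi> r'"
    using exists_set_pmf_ge_expectation[OF finD] by blast
  ultimately have less: "\<Phi> r0 < \<Phi> r'" by linarith
  have r0S: "r0 \<in> S" and r'S: "r' \<in> S" using r0 r' F D by auto
  obtain r1 where r1: "r1 \<in> S" and below: "\<forall>v\<in>L. r1 v \<le> r0 v"
    and dominates: "\<And>i. card {v\<in>L. r' v \<le> i} \<le> card {v\<in>L. r1 v \<le> i}"
    using exists_prefix_dominating_below[OF L r0S] r'S by blast
  have "\<Phi> r' \<le> \<Phi> r1"
    unfolding \<Phi>_def
    using finite_subset[OF L finite_U] feasible_range[OF r'S] feasible_range[OF r1] L f_mono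
    by (intro sum_comp_le_if_prefix_counts_le[where n = "card U"] dominates) auto
  moreover have "\<forall>v\<in>L. f (r0 v) \<le> f (r1 v)"
    using below feasible_range[OF r0S] feasible_range[OF r1] L f_mono by fastforce
  moreover have "\<not> (\<forall>v\<in>L. f (r1 v) \<le> f (r0 v))"
  proof
    assume "\<forall>v\<in>L. f (r1 v) \<le> f (r0 v)"
    then have "\<Phi> r1 \<le> \<Phi> r0" unfolding \<Phi>_def by (intro sum_mono) auto
    then show False using less \<open>\<Phi> r' \<le> \<Phi> r1\<close> by linarith
  qed
  ultimately show ?thesis using r0(1) r1 by (auto simp: not_le)
qed

lemma Max_dval_le_of_maxmin_fair:
  assumes f_mono: "\<forall>i j. 1 \<le> i \<longrightarrow> i \<le> j \<longrightarrow> j \<le> card U \<longrightarrow> f j \<le> f i"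
    and fair: "maxmin_fair U S f g F" and D: "set_pmf D \<subseteq> S" and U: "U \<noteq> {}"
  shows "(MAX v\<in>U. dval f g F v) \<le> (MAX v\<in>U. dval f g D v)"
proof (rule ccontr)
  define L where "L = {v\<in>U. dval f g F v < (MAX u\<in>U. dval f g F u)}"
  have L: "L \<subseteq> U" unfolding L_def by auto
  assume less: "\<not> ?thesis"
  have F: "set_pmf F \<subseteq> S" using fair unfolding maxmin_fair_def by simp
  have "(\<Sum>v\<in>L. dval f g F v) < (\<Sum>v\<in>L. dval f g D v)"
    unfolding L_def using less by (intro sum_dval_gain_below_Max[OF F D U]) simp
  then obtain r0 r1 v0 where r0: "r0 \<in> set_pmf F" and r1: "r1 \<in> S"
    and weak: "\<forall>v\<in>L. f (r0 v) \<le> f (r1 v)" and v0: "v0 \<in> L" "f (r0 v0) < f (r1 v0)"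
    using exists_improving_replacement[OF f_mono F D L] by blast
  define D' where "D' = map_pmf (\<lambda>r. if r = r0 then r1 else r) F"
  have D': "set_pmf D' \<subseteq> S" unfolding D'_def using F r1 by auto
  have D'_eq: "dval f g D' v = dval f g F v + pmf F r0 * (f (r1 v) - f (r0 v))" for v
    unfolding D'_def by (rule dval_map_pmf_replace[OF finite_set_pmf_feasible[OF F]])
  have pos: "0 < pmf F r0" using r0 by (simp add: pmf_positive)
  have "\<forall>u\<in>U. dval f g F u < dval f g D' u \<longrightarrow>
          (\<exists>y\<in>U. dval f g D' y < dval f g F y \<and> dval f g F y \<le> dval f g F u)"
    using fair D' unfolding maxmin_fair_def by blast
  moreover have "dval f g F v0 < dval f g D' v0" using D'_eq[of v0] v0(2) pos by simp
  ultimately obtain y where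
    y: "y \<in> U" "dval f g D' y < dval f g F y" "dval f g F y \<le> dval f g F v0"
    using v0(1) L by blast
  then have "y \<in> L" using v0(1) unfolding L_def by auto
  then have "0 \<le> pmf F r0 * (f (r1 y) - f (r0 y))" using weak pos by simp
  then show False using y(2) D'_eq[of y] by linarith
qed

end

theorem mainTheorem3:
  fixes U :: "'a set" and C :: "nat \<Rightarrow> 'a set" and t :: nat
    and R :: "'a \<Rightarrow> real" and ub :: "nat \<Rightarrow> nat \<Rightarrow> int"
    and f :: "nat \<Rightarrow> real" and g :: "'a \<Rightarrow> real"
    and F D :: "('a \<Rightarrow> nat) pmf"
  assumes finU: "finite U"
    and partC: "\<forall>k\<in>{1..t}. C k \<subseteq> U"
    and disjC: "\<forall>k\<in>{1..t}. \<forall>l\<in>{1..t}. k \<noteq> l \<longrightarrow> C k \<inter> C l = {}"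
    and coverC: "(\<Union>k\<in>{1..t}. C k) = U"
    and injR: "inj_on R U"
    and f_mono: "\<forall>i j. 1 \<le> i \<longrightarrow> i \<le> j \<longrightarrow> j \<le> card U \<longrightarrow> f j \<le> f i"
    and g_mono: "\<forall>u\<in>U. \<forall>v\<in>U. R u \<ge> R v \<longrightarrow> g u \<ge> g v"
    and S_ne: "feasible U C t ub \<noteq> {}"
    and fair: "maxmin_fair U (feasible U C t ub) f g F"
    and D_S: "set_pmf D \<subseteq> feasible U C t ub"
  shows "(MAX u\<in>U. dval f g F u) - (MIN v\<in>U. dval f g F v)
           \<le> (MAX u\<in>U. dval f g D u) - (MIN v\<in>U. dval f g D v)"
proof (cases "U = {}")
  case False
  interpret upper_bound_constraints U C t ub
    using finU partC disjC coverC by unfold_locales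
  show ?thesis
    using Max_dval_le_of_maxmin_fair[OF f_mono fair D_S False]
      Min_dval_le_of_maxmin_fair[OF finU False fair D_S]
    by linarith
qed simp

end
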